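(* For every pattern class $\mathcal{P}$, \[ \mathsf{opt}_{\operatorname{bandit}}^{\operatorname{adap}}(\mathcal{P})=\mathsf{opt\_d}_{\operatorname{bandit}}^{\operatorname{adap}}(\mathcal{P}). \]
   Context: $\mathcal{X}$ is a set and $\mathcal{Y}$ a countable label set. A pattern is a finite sequence of examples in $\mathcal{X}\times\mathcal{Y}$; a pattern class is a nonempty set of patterns closed under subsequences. A bandit history of (instance, correct/incorrect, prediction) triples is realizable by $\mathcal{P}$ if some choice of true labels agreeing with all observations makes the labeled sequence an element of $\mathcal{P}$. Primal game: in each round the adversary chooses $x_t$ (from the history), the learner chooses a distribution $\pi^{(t)}$ on $\mathcal{Y}$ (from history and $x_t$) and reveals it, the adversary chooses a distribution $\tau^{(t)}$ on $\mathcal{Y}$ (from history, $x_t$, $\pi^{(t)}$), then $\hat y_t\sim\pi^{(t)}$ and $y_t\sim\tau^{(t)}$ are drawn and the learner learns only whether $\hat y_t=y_t$; $\mathsf{opt}_{\operatorname{bandit}}^{\operatorname{adap}}(\mathcal{P})=\inf_{\text{learner}}\sup_{\text{adversary}}$ expected number of mistakes ($\hat y_t\neq y_t$). Dual game: in each round the adversary chooses $x_t$ and a distribution $\tau^{(t)}$ (from the history) and reveals both; the learner chooses $\pi^{(t)}$ (from history, $x_t$, $\tau^{(t)}$), $\hat y_t\sim\pi^{(t)}$, $y_t\sim\tau^{(t)}$, and the learner learns only whether $\hat y_t=y_t$; $\mathsf{opt\_d}_{\operatorname{bandit}}^{\operatorname{adap}}(\mathcal{P})=\sup_{\text{adversary}}\inf_{\text{learner}}$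 expected number of mistakes. In both games adversaries must be consistent with $\mathcal{P}$: whenever the history is realizable, every $y$ in the support of $\tau^{(t)}$ keeps the extended history realizable. *)

theory Defs
  imports "HOL-Probability.Probability_Mass_Function" "HOL-Library.Sublist"
begin

type_synonym ('x, 'y) pattern = "('x \<times> 'y) list"

definition pattern_class :: "('x, 'y) pattern set \<Rightarrow> bool" where
  "pattern_class P \<longleftrightarrow> P \<noteq> {} \<and> (\<forall>s \<in> P. \<forall>s'. subseq s' s \<longrightarrow> s' \<in> P)"

text \<open>A history entry is (instance, correct?, prediction).\<close>
type_synonym ('x, 'y) bhist = "('x \<times> bool \<times> 'y) list"

definition agrees :: "('x, 'y) bhist \<Rightarrow> 'y list \<Rightarrow> bool" where
  "agrees h ys \<longleftrightarrow> length ys = length h \<and>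
     (\<forall>i < length h. (fst (snd (h ! i)) \<longleftrightarrow> ys ! i = snd (snd (h ! i))))"

definition realizable :: "('x, 'y) pattern set \<Rightarrow> ('x, 'y) bhist \<Rightarrow> bool" where
  "realizable P h \<longleftrightarrow> (\<exists>ys. agrees h ys \<and> zip (map fst h) ys \<in> P)"

definition realizable_ext :: "('x, 'y) pattern set \<Rightarrow> ('x, 'y) bhist \<Rightarrow> 'x \<Rightarrow> 'y \<Rightarrow> bool" where
  "realizable_ext P h x y \<longleftrightarrow> (\<exists>ys. agrees h ys \<and> zip (map fst h) ys @ [(x, y)] \<in> P)"

definition mistakes :: "('x, 'y) bhist \<Rightarrow> nat" where
  "mistakes h = length (filter (\<lambda>e. \<not> fst (snd e)) h)"

definition round_step :: "('x, 'y) bhist \<Rightarrow> 'x \<Rightarrow> 'y pmf \<Rightarrow> 'y pmf \<Rightarrow> ('x, 'y) bhist pmf" where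
  "round_step h x \<pi> \<tau> = map_pmf (\<lambda>(yh, y). h @ [(x, yh = y, yh)]) (pair_pmf \<pi> \<tau>)"

text \<open>Learner: history, x_t \<mapsto> \<pi>. Adversary: (history \<mapsto> x_t,
  history, x_t, \<pi> \<mapsto> \<tau>).\<close>
primrec primal_hist ::
  "(('x, 'y) bhist \<Rightarrow> 'x \<Rightarrow> 'y pmf) \<Rightarrow> (('x, 'y) bhist \<Rightarrow> 'x) \<Rightarrow>
   (('x, 'y) bhist \<Rightarrow> 'x \<Rightarrow> 'y pmf \<Rightarrow> 'y pmf) \<Rightarrow> nat \<Rightarrow> ('x, 'y) bhist pmf" where
  "primal_hist L ax aT 0 = return_pmf []"
| "primal_hist L ax aT (Suc n) = primal_hist L ax aT n \<bind>
     (\<lambda>h. let x = ax h; \<pi> = L h x in round_step h x \<pi> (aT h x \<pi>))"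

definition primal_mistakes where
  "primal_mistakes L ax aT =
     (SUP n. \<integral>\<^sup>+ h. of_nat (mistakes h) \<partial>measure_pmf (primal_hist L ax aT n))"

definition primal_consistent ::
  "('x, 'y) pattern set \<Rightarrow> (('x, 'y) bhist \<Rightarrow> 'x) \<Rightarrow>
   (('x, 'y) bhist \<Rightarrow> 'x \<Rightarrow> 'y pmf \<Rightarrow> 'y pmf) \<Rightarrow> bool" where
  "primal_consistent P ax aT \<longleftrightarrow>
     (\<forall>h \<pi>. realizable P h \<longrightarrow> (\<forall>y \<in> set_pmf (aT h (ax h) \<pi>). realizable_ext P h (ax h) y))"

definition opt_bandit_adap :: "('x, 'y::countable) pattern set \<Rightarrow> ennreal" where
  "opt_bandit_adap P =
     (INF L. SUP (ax, aT) \<in> {(ax, aT). primal_consistent P ax aT}. primal_mistakes L ax aT)"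

text \<open>Adversary: (history \<mapsto> x_t, history \<mapsto> \<tau>), both revealed.
  Learner: history, x_t, \<tau> \<mapsto> \<pi>.\<close>
primrec dual_hist ::
  "(('x, 'y) bhist \<Rightarrow> 'x) \<Rightarrow> (('x, 'y) bhist \<Rightarrow> 'y pmf) \<Rightarrow>
   (('x, 'y) bhist \<Rightarrow> 'x \<Rightarrow> 'y pmf \<Rightarrow> 'y pmf) \<Rightarrow> nat \<Rightarrow> ('x, 'y) bhist pmf" where
  "dual_hist ax aT L 0 = return_pmf []"
| "dual_hist ax aT L (Suc n) = dual_hist ax aT L n \<bind>
     (\<lambda>h. let x = ax h; \<tau> = aT h in round_step h x (L h x \<tau>) \<tau>)"

definition dual_mistakes where
  "dual_mistakes ax aT L =
     (SUP n. \<integral>\<^sup>+ h. of_nat (mistakes h) \<partial>measure_pmf (dual_hist ax aT L n))"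

definition dual_consistent ::
  "('x, 'y) pattern set \<Rightarrow> (('x, 'y) bhist \<Rightarrow> 'x) \<Rightarrow> (('x, 'y) bhist \<Rightarrow> 'y pmf) \<Rightarrow> bool" where
  "dual_consistent P ax aT \<longleftrightarrow>
     (\<forall>h. realizable P h \<longrightarrow> (\<forall>y \<in> set_pmf (aT h). realizable_ext P h (ax h) y))"

definition opt_d_bandit_adap :: "('x, 'y::countable) pattern set \<Rightarrow> ennreal" where
  "opt_d_bandit_adap P =
     (SUP (ax, aT) \<in> {(ax, aT). dual_consistent P ax aT}. INF L. dual_mistakes ax aT L)"

end

theory Submission
  imports Defs
begin

text \<open>
  A dual adversary is a primal adversary that ignores the revealed \<pi>, and a dual learner may
  ignore the revealed \<tau>; this gives the easy inequality. For the converse let V h be the value of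
  the dual game started at history h. Pasting near-optimal adversaries behind every outcome of a
  round shows that, for every consistent label distribution \<tau> of the next round, V h is at least
  the expected value of V on the extended history for the best pure prediction against \<tau>.
  A minimax argument for this one-round game, whose loss is V of the extended history, then
  gives a prediction distribution whose expected continuation value exceeds V h by at most \<epsilon>
  against every consistent label. A primal learner playing these with \<epsilon> = e / 2 ^ (t + 1) in
  round t keeps the expectation of V below V [] + e, and V dominates the number of mistakes
  already made.
\<close>

lemma pmf_proportional_exists:
  fixes w :: "'a \<Rightarrow> real"
  assumes "finite F" "F \<noteq> {}" and w: "\<And>k. k \<in> F \<Longrightarrow> 0 < w k"
  shows "\<exists>\<pi>. set_pmf \<pi> \<subseteq> F \<and> (\<forall>k\<in>F. pmf \<pi> k = w k / sum w F)"
proof -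
  have W: "0 < sum w F" using assms by (intro sum_pos) auto
  define f where "f k = (if k \<in> F then w k / sum w F else 0)" for k
  have f_nonneg: "0 \<le> f k" for k using w W by (auto simp: f_def less_imp_le)
  have "(\<integral>\<^sup>+ k. ennreal (f k) \<partial>count_space UNIV) = (\<Sum>k\<in>F. ennreal (f k))"
    using assms(1) by (intro nn_integral_count_space') (auto simp: f_def)
  also have "\<dots> = ennreal (\<Sum>k\<in>F. f k)" using f_nonneg by simp
  also have "(\<Sum>k\<in>F. f k) = 1" using W by (simp add: f_def sum_divide_distrib[symmetric])
  finally have "(\<integral>\<^sup>+ k. ennreal (f k) \<partial>count_space UNIV) = 1" by simp
  then have "pmf (embed_pmf f) k = f k" for k by (intro pmf_embed_pmf f_nonneg)
  then show ?thesis
    by (intro exI[of _ "embed_pmf f"]) (auto simp: set_pmf_eq f_def)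
qed

lemma nn_integral_proportional_pmf:
  assumes "finite F" "set_pmf \<pi> \<subseteq> F" "\<And>k. k \<in> F \<Longrightarrow> pmf \<pi> k = w k / sum w F"
    and "\<And>k. k \<in> F \<Longrightarrow> f k = ennreal (r k) \<and> 0 \<le> r k"
  shows "(\<integral>\<^sup>+ k. f k \<partial>measure_pmf \<pi>) = ennreal ((\<Sum>k\<in>F. r k * w k) / sum w F)"
proof -
  have "(\<integral>\<^sup>+ k. f k \<partial>measure_pmf \<pi>) = (\<Sum>k\<in>F. f k * ennreal (pmf \<pi> k))"
    using assms(1,2) by (intro nn_integral_measure_pmf_support) auto
  also have "\<dots> = (\<Sum>k\<in>F. ennreal (r k * pmf \<pi> k))"
    using assms(4) by (intro sum.cong) (auto simp: ennreal_mult)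
  also have "\<dots> = ennreal (\<Sum>k\<in>F. r k * pmf \<pi> k)"
    using assms(4) by (intro sum_ennreal) auto
  also have "(\<Sum>k\<in>F. r k * pmf \<pi> k) = (\<Sum>k\<in>F. r k * w k) / sum w F"
    using assms(3) by (simp add: sum_divide_distrib)
  finally show ?thesis .
qed

lemma nn_integral_count_space_less_imp_finite_sum:
  fixes f :: "'a::countable \<Rightarrow> ennreal"
  assumes "x < (\<integral>\<^sup>+ k. f k \<partial>count_space UNIV)"
  shows "\<exists>Q. finite Q \<and> x < sum f Q"
proof -
  define F :: "nat \<Rightarrow> 'a set" where "F n = to_nat -` {..<n}" for n
  have fin: "finite (F n)" for n unfolding F_def by (rule finite_vimageI) (auto simp: inj_to_nat)
  have "incseq (\<lambda>n k. f k * indicator (F n) k)"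
    unfolding F_def by (intro incseq_SucI le_funI) (auto split: split_indicator)
  moreover have "(SUP n. f k * indicator (F n) k) = f k" for k
  proof (rule antisym)
    show "f k \<le> (SUP n. f k * indicator (F n) k)"
      by (rule SUP_upper2[of "Suc (to_nat k)"]) (simp_all add: F_def)
  qed (auto intro: SUP_least split: split_indicator)
  ultimately have "(\<integral>\<^sup>+ k. f k \<partial>count_space UNIV) = (SUP n. \<integral>\<^sup>+ k. f k * indicator (F n) k \<partial>count_space UNIV)"
    using nn_integral_monotone_convergence_SUP[of "\<lambda>n k. f k * indicator (F n) k" "count_space UNIV"]
    by simp
  also have "\<dots> = (SUP n. sum f (F n))"
  proof -
    have "(\<integral>\<^sup>+ k. f k * indicator (F n) k \<partial>count_space UNIV) = sum f (F n)" for n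
      using fin by (subst nn_integral_count_space'[of "F n"]) (auto split: split_indicator)
    then show ?thesis by simp
  qed
  finally obtain n where "x < sum f (F n)" using assms by (auto simp: less_SUP_iff)
  then show ?thesis using fin by blast
qed

lemma pmf_with_support:
  fixes S :: "'a::countable set"
  assumes "S \<noteq> {}"
  shows "\<exists>\<nu>. set_pmf \<nu> = S"
  using assms by (intro exI[of _ "map_pmf (from_nat_into S) (geometric_pmf (1/2))"])
    (simp add: set_pmf_geometric)

lemma pmf_dominating_exists:
  fixes f :: "'a::countable \<Rightarrow> real"
  assumes mass: "(\<integral>\<^sup>+ k. ennreal (f k) \<partial>count_space UNIV) < 1"
    and f: "\<And>k. 0 \<le> f k" "\<And>k. f k \<noteq> 0 \<Longrightarrow> k \<in> S" and "S \<noteq> {}"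
  shows "\<exists>\<tau>. set_pmf \<tau> = S \<and> (\<forall>k. f k \<le> pmf \<tau> k)"
proof -
  define \<Lambda> where "\<Lambda> = enn2real (\<integral>\<^sup>+ k. ennreal (f k) \<partial>count_space UNIV)"
  have "(\<integral>\<^sup>+ k. ennreal (f k) \<partial>count_space UNIV) < top"
    using mass ennreal_one_less_top by (rule order.strict_trans)
  then have \<Lambda>: "(\<integral>\<^sup>+ k. ennreal (f k) \<partial>count_space UNIV) = ennreal \<Lambda>" "\<Lambda> < 1" "0 \<le> \<Lambda>"
    using mass by (simp_all add: \<Lambda>_def)
  obtain \<nu> where \<nu>: "set_pmf \<nu> = S" using pmf_with_support[OF \<open>S \<noteq> {}\<close>] by blast
  define g where "g k = f k + (1 - \<Lambda>) * pmf \<nu> k" for k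
  have g_nonneg: "0 \<le> g k" for k using f(1)[of k] \<Lambda>(2) by (simp add: g_def)
  have "(\<integral>\<^sup>+ k. ennreal (g k) \<partial>count_space UNIV) =
      (\<integral>\<^sup>+ k. ennreal (f k) + ennreal (1 - \<Lambda>) * ennreal (pmf \<nu> k) \<partial>count_space UNIV)"
    using f(1) \<Lambda>(2) by (intro nn_integral_cong) (simp add: g_def ennreal_mult)
  also have "\<dots> = ennreal \<Lambda> + ennreal (1 - \<Lambda>)"
    by (simp add: nn_integral_add nn_integral_cmult \<Lambda>(1) nn_integral_pmf measure_pmf.emeasure_space_1)
  also have "\<dots> = 1"
    using \<Lambda>(2,3) ennreal_plus[of \<Lambda> "1 - \<Lambda>"] by simp
  finally have pmf_\<tau>: "pmf (embed_pmf g) k = g k" for k by (intro pmf_embed_pmf g_nonneg)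
  have "g k \<noteq> 0 \<longleftrightarrow> k \<in> S" for k
  proof
    show "k \<in> S" if "g k \<noteq> 0"
    proof (rule ccontr)
      assume "k \<notin> S"
      then have "f k = 0" "pmf \<nu> k = 0" using f(2)[of k] \<nu> by (auto simp: set_pmf_eq)
      then show False using that by (simp add: g_def)
    qed
    show "g k \<noteq> 0" if "k \<in> S"
    proof -
      have "0 < (1 - \<Lambda>) * pmf \<nu> k" using that \<nu> \<Lambda>(2) by (simp add: pmf_positive)
      then show ?thesis using f(1)[of k] by (simp add: g_def)
    qed
  qed
  then have "set_pmf (embed_pmf g) = S" by (simp add: set_eq_iff set_pmf_iff pmf_\<tau>)
  moreover have "f k \<le> pmf (embed_pmf g) k" for k
    using \<Lambda>(2) by (simp add: pmf_\<tau> g_def)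
  ultimately show ?thesis by blast
qed

lemma nn_integral_pmf_if_eq:
  "(\<integral>\<^sup>+ y. (if k = y then A else B) \<partial>measure_pmf \<tau>) =
    ennreal (pmf \<tau> k) * A + ennreal (1 - pmf \<tau> k) * B"
proof -
  have "(\<integral>\<^sup>+ y. (if k = y then A else B) \<partial>measure_pmf \<tau>) =
        (\<integral>\<^sup>+ y. A * indicator {k} y + B * indicator (- {k}) y \<partial>measure_pmf \<tau>)"
    by (intro nn_integral_cong) (auto split: split_indicator)
  also have "\<dots> = A * emeasure (measure_pmf \<tau>) {k} + B * emeasure (measure_pmf \<tau>) (- {k})"
    by (simp add: nn_integral_add nn_integral_cmult_indicator)
  also have "emeasure (measure_pmf \<tau>) (- {k}) = ennreal (1 - pmf \<tau> k)"
    using measure_pmf.prob_compl[of "{k}" \<tau>]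
    by (simp add: measure_pmf.emeasure_eq_measure measure_pmf_single Compl_eq_Diff_UNIV)
  finally show ?thesis by (simp add: emeasure_pmf_single mult.commute)
qed

lemma less_add_SUP_ennreal_imp:
  fixes f g :: "'a \<Rightarrow> ennreal"
  assumes "I \<noteq> {}" and "c < p * (SUP i\<in>I. f i) + q * (SUP i\<in>I. g i)"
  shows "\<exists>i\<in>I. \<exists>j\<in>I. c < p * f i + q * g j"
proof (rule ccontr)
  assume "\<not> ?thesis"
  then have "p * f i + q * g j \<le> c" if "i \<in> I" "j \<in> I" for i j
    using that by (auto simp: not_less)
  then have "(SUP j\<in>I. SUP i\<in>I. p * f i + q * g j) \<le> c"
    by (intro SUP_least)
  moreover have "(SUP j\<in>I. SUP i\<in>I. p * f i + q * g j) = p * (SUP i\<in>I. f i) + q * (SUP i\<in>I. g i)"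
    using assms(1)
    by (simp add: SUP_mult_left_ennreal ennreal_SUP_add_left[symmetric] ennreal_SUP_add_right)
  ultimately show False using assms(2) by simp
qed

section \<open>A minimax theorem for one bandit round\<close>

text \<open>Predicting k costs a k if the label is k and b k otherwise.\<close>

locale bandit_round =
  fixes Y :: "'y set" and a b :: "'y \<Rightarrow> ennreal" and c c' :: real
  assumes c'_nonneg: "0 \<le> c'" and c'_less: "c' < c"
    and adversary_loses: "\<And>\<tau>. set_pmf \<tau> \<subseteq> Y \<Longrightarrow>
      \<exists>k. ennreal (pmf \<tau> k) * a k + ennreal (1 - pmf \<tau> k) * b k < c'"
begin

definition ar :: "'y \<Rightarrow> real" where "ar k = enn2real (a k)"

definition br :: "'y \<Rightarrow> real" where "br k = enn2real (b k)"

lemma ar_nonneg: "0 \<le> ar k" and br_nonneg: "0 \<le> br k"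
  by (simp_all add: ar_def br_def)

lemma a_eq_ar: "a k \<noteq> \<infinity> \<Longrightarrow> a k = ennreal (ar k)"
  and b_eq_br: "b k \<noteq> \<infinity> \<Longrightarrow> b k = ennreal (br k)"
  by (simp_all add: ar_def br_def less_top)

lemma pure_response:
  assumes "y \<in> Y"
  obtains k where "(if k = y then a k else b k) < c'"
proof -
  obtain k where "ennreal (pmf (return_pmf y) k) * a k + ennreal (1 - pmf (return_pmf y) k) * b k < c'"
    using adversary_loses[of "return_pmf y"] assms by auto
  then have "(if k = y then a k else b k) < c'" by (cases "k = y") (simp_all add: pmf_return)
  then show thesis by (rule that)
qed

lemma expected_loss_ge:
  assumes "a k \<noteq> \<infinity>" "b k \<noteq> \<infinity>" "0 \<le> p" "p \<le> 1" "t \<le> p * ar k + (1 - p) * br k"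
  shows "ennreal t \<le> ennreal p * a k + ennreal (1 - p) * b k"
proof -
  have "ennreal t \<le> ennreal (p * ar k + (1 - p) * br k)" using assms(5) by (rule ennreal_leI)
  also have "\<dots> = ennreal p * a k + ennreal (1 - p) * b k"
    using assms(1-4) ar_nonneg br_nonneg by (simp add: a_eq_ar b_eq_br ennreal_mult)
  finally show ?thesis .
qed

lemma nn_integral_equalizing_pmf:
  assumes "finite Q" "set_pmf \<pi> \<subseteq> Q" "\<And>k. k \<in> Q \<Longrightarrow> pmf \<pi> k = w k / sum w Q"
    and "\<And>k. k \<in> Q \<Longrightarrow> a k \<noteq> \<infinity> \<and> b k \<noteq> \<infinity> \<and> (ar k - br k) * w k = s"
  shows "(\<integral>\<^sup>+ k. (if k = y then a k else b k) \<partial>measure_pmf \<pi>) =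
    ennreal (((\<Sum>k\<in>Q. br k * w k) + (if y \<in> Q then s else 0)) / sum w Q)"
proof -
  have "(\<integral>\<^sup>+ k. (if k = y then a k else b k) \<partial>measure_pmf \<pi>) =
      ennreal ((\<Sum>k\<in>Q. (if k = y then ar k else br k) * w k) / sum w Q)"
    using assms(4) ar_nonneg br_nonneg
    by (intro nn_integral_proportional_pmf[OF assms(1-3)]) (auto simp: a_eq_ar b_eq_br)
  also have "(\<Sum>k\<in>Q. (if k = y then ar k else br k) * w k) =
      (\<Sum>k\<in>Q. br k * w k + (if k = y then (ar k - br k) * w k else 0))"
    by (rule sum.cong) (auto simp: algebra_simps)
  also have "\<dots> = (\<Sum>k\<in>Q. br k * w k) + (if y \<in> Q then s else 0)"
    using assms(1,4) by (simp add: sum.distrib)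
  finally show ?thesis .
qed

text \<open>The probability of k at which predicting k has expected cost t (its limit 1 if b k = \<infinity>).\<close>

definition indifference_prob :: "real \<Rightarrow> 'y \<Rightarrow> real" where
  "indifference_prob t k = (if b k = \<infinity> then 1 else (br k - t) / (br k - ar k))"

lemma indifference_prob_eq:
  "b k \<noteq> \<infinity> \<Longrightarrow> ar k \<noteq> br k \<Longrightarrow> indifference_prob t k * (br k - ar k) = br k - t"
  by (simp add: indifference_prob_def)

end

locale bandit_round_costly = bandit_round +
  assumes costly: "\<And>k. c < b k"
begin

lemma c'_less_b: "ennreal c' < b k"
  using costly[of k] c'_less by (meson ennreal_leI less_imp_le order.strict_trans1)

lemma ar_less: "y \<in> Y \<Longrightarrow> a y \<noteq> \<infinity> \<and> ar y < c'"
proof -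
  assume "y \<in> Y"
  then obtain k where "(if k = y then a k else b k) < c'" by (rule pure_response)
  with c'_less_b[of k] have "a y < c'" by (auto split: if_splits)
  then show ?thesis using c'_nonneg by (cases "a y") (auto simp: ar_def ennreal_less_iff)
qed

lemma br_greater: "b y \<noteq> \<infinity> \<Longrightarrow> c < br y"
  using costly[of y] c'_nonneg c'_less by (simp add: b_eq_br ennreal_less_iff)

lemma indifference_prob_ge: "y \<in> Y \<Longrightarrow> 1 - c' / c \<le> indifference_prob c' y"
proof (cases "b y = \<infinity>")
  case False
  assume "y \<in> Y"
  note ar = ar_less[OF this] and br = br_greater[OF False]
  have "1 - c' / c \<le> 1 - c' / br y" using c'_nonneg c'_less br by (simp add: frac_le)
  also have "\<dots> = (br y - c') / br y" using c'_nonneg c'_less br by (simp add: field_simps)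
  also have "\<dots> \<le> (br y - c') / (br y - ar y)"
    using c'_nonneg c'_less ar br ar_nonneg by (intro divide_left_mono mult_pos_pos) auto
  also have "\<dots> = indifference_prob c' y" using False by (simp add: indifference_prob_def)
  finally show ?thesis .
qed (use c'_nonneg c'_less in \<open>simp add: indifference_prob_def\<close>)

lemma indifference_prob_pos: "y \<in> Y \<Longrightarrow> 0 < indifference_prob c' y"
  using indifference_prob_ge c'_nonneg c'_less
  by (meson divide_less_eq_1_pos le_less_trans less_le_trans diff_gt_0_iff_gt)

lemma expected_loss_ge_below_indifference:
  assumes "k \<in> Y" "pmf \<tau> k < indifference_prob c' k"
  shows "ennreal c' \<le> ennreal (pmf \<tau> k) * a k + ennreal (1 - pmf \<tau> k) * b k"
proof (cases "b k = \<infinity>")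
  case True
  then show ?thesis using assms(2) by (simp add: indifference_prob_def ennreal_mult_top)
next
  case False
  note ar = ar_less[OF assms(1)] and br = br_greater[OF False]
  have "pmf \<tau> k * (br k - ar k) \<le> indifference_prob c' k * (br k - ar k)"
    using assms(2) ar br c'_less by (intro mult_right_mono) auto
  then have "c' \<le> pmf \<tau> k * ar k + (1 - pmf \<tau> k) * br k"
    using ar br c'_less indifference_prob_eq[OF False, of c'] by (simp add: algebra_simps)
  then show ?thesis using ar False by (intro expected_loss_ge) (auto simp: pmf_le_1)
qed

lemma sum_indifference_prob_le: "finite F \<Longrightarrow> F \<subseteq> Y \<Longrightarrow> sum (indifference_prob c') F \<le> 1"
proof (rule ccontr)
  assume F: "finite F" "F \<subseteq> Y" and "\<not> sum (indifference_prob c') F \<le> 1"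
  then have gt: "1 < sum (indifference_prob c') F" by simp
  then have "F \<noteq> {}" by auto
  with F indifference_prob_pos obtain \<tau> where \<tau>: "set_pmf \<tau> \<subseteq> F"
    "\<And>k. k \<in> F \<Longrightarrow> pmf \<tau> k = indifference_prob c' k / sum (indifference_prob c') F"
    using pmf_proportional_exists[of F "indifference_prob c'"] by blast
  have "ennreal c' \<le> ennreal (pmf \<tau> k) * a k + ennreal (1 - pmf \<tau> k) * b k" for k
  proof (cases "k \<in> F")
    case False
    then have "pmf \<tau> k = 0" using \<tau>(1) by (meson set_pmf_iff subsetD)
    then show ?thesis using c'_less_b[of k] by simp
  next
    case True
    with F have k: "k \<in> Y" by auto
    then have "pmf \<tau> k < indifference_prob c' k"
      using \<tau>(2)[OF True] gt indifference_prob_pos[OF k] by (simp add: divide_less_eq)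
    with k show ?thesis by (rule expected_loss_ge_below_indifference)
  qed
  with adversary_loses[of \<tau>] \<tau>(1) F show False by (meson leD order_trans)
qed

lemma finite_labels: "finite Y"
proof (rule ccontr)
  assume "infinite Y"
  define \<kappa> where "\<kappa> = 1 - c' / c"
  have "0 < \<kappa>" using c'_nonneg c'_less by (simp add: \<kappa>_def field_simps)
  obtain N :: nat where N: "1 / \<kappa> < N" using reals_Archimedean2 by blast
  obtain F where F: "finite F" "F \<subseteq> Y" "card F = N"
    using infinite_arbitrarily_large[OF \<open>infinite Y\<close>] by blast
  have "1 < N * \<kappa>" using N \<open>0 < \<kappa>\<close> by (simp add: field_simps)
  also have "\<dots> = sum (\<lambda>_. \<kappa>) F" using F by simp
  also have "\<dots> \<le> sum (indifference_prob c') F"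
    using F indifference_prob_ge by (intro sum_mono) (auto simp: \<kappa>_def)
  finally show False using sum_indifference_prob_le[OF F(1,2)] by simp
qed

lemma b_finite:
  assumes "y \<in> Y" "y' \<in> Y" "y' \<noteq> y"
  shows "b y \<noteq> \<infinity>"
proof
  assume "b y = \<infinity>"
  then have "1 < sum (indifference_prob c') {y, y'}"
    using assms indifference_prob_pos[of y'] by (simp add: indifference_prob_def)
  with sum_indifference_prob_le[of "{y, y'}"] assms show False by simp
qed

lemma learner_wins:
  assumes "y0 \<in> Y" "y1 \<in> Y" "y0 \<noteq> y1"
  shows "\<exists>\<pi>. \<forall>y\<in>Y. (\<integral>\<^sup>+ k. (if k = y then a k else b k) \<partial>measure_pmf \<pi>) \<le> c"
proof -
  have b: "b k \<noteq> \<infinity>" if "k \<in> Y" for k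
    using assms that by (metis b_finite)
  \<comment> \<open>Weights 1 / (b k - a k) make the expected cost the same against every label.\<close>
  define w where "w k = 1 / (br k - ar k)" for k
  have w: "0 < w k" "(ar k - br k) * w k = -1" if "k \<in> Y" for k
    using ar_less[OF that] br_greater[OF b[OF that]] c'_less by (simp_all add: w_def field_simps)
  obtain \<pi> where \<pi>: "set_pmf \<pi> \<subseteq> Y" "\<And>k. k \<in> Y \<Longrightarrow> pmf \<pi> k = w k / sum w Y"
    using pmf_proportional_exists[of Y w] finite_labels assms(1) w(1) by blast
  have "sum w Y > 0" using finite_labels assms(1) w(1) by (intro sum_pos) auto
  have "(\<Sum>k\<in>Y. br k * w k) = (\<Sum>k\<in>Y. indifference_prob c' k + c' * w k)"
    by (rule sum.cong) (use b in \<open>auto simp: indifference_prob_def w_def diff_divide_distrib\<close>)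
  also have "\<dots> \<le> 1 + c' * sum w Y"
    using sum_indifference_prob_le[OF finite_labels order.refl] by (simp add: sum.distrib sum_distrib_left)
  also have "\<dots> \<le> 1 + c * sum w Y"
    using \<open>sum w Y > 0\<close> c'_less by simp
  finally have "((\<Sum>k\<in>Y. br k * w k) + -1) / sum w Y \<le> c"
    using \<open>sum w Y > 0\<close> by (simp add: divide_le_eq)
  moreover have "(\<integral>\<^sup>+ k. (if k = y then a k else b k) \<partial>measure_pmf \<pi>) =
      ennreal (((\<Sum>k\<in>Y. br k * w k) + -1) / sum w Y)" if "y \<in> Y" for y
    using that ar_less b w by (subst nn_integral_equalizing_pmf[OF finite_labels \<pi>]) auto
  ultimately show ?thesis by (intro exI[of _ \<pi>]) (simp add: ennreal_leI)
qed

end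

locale bandit_round_cheap = bandit_round Y a b c c' for Y :: "'y::countable set" and a b c c' +
  assumes cheap: "\<And>k. b k \<le> c \<Longrightarrow> k \<in> Y \<and> c < a k"
    and cheap_exists: "\<exists>k. b k \<le> c"
begin

lemma br_le: "b k \<le> c \<Longrightarrow> b k \<noteq> \<infinity> \<and> br k \<le> c"
  using c'_nonneg c'_less by (cases "b k") (auto simp: br_def top_unique)

lemma ar_greater: "b k \<le> c \<Longrightarrow> a k \<noteq> \<infinity> \<Longrightarrow> c < ar k"
  using cheap[of k] c'_nonneg c'_less by (simp add: a_eq_ar ennreal_less_iff)

definition cheap_prob :: "'y \<Rightarrow> real" where
  "cheap_prob k = (if b k \<le> c \<and> a k \<noteq> \<infinity> then indifference_prob c k else 0)"

lemma cheap_prob_eq: "b k \<le> c \<Longrightarrow> a k \<noteq> \<infinity> \<Longrightarrow> cheap_prob k * (ar k - br k) = c - br k"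
  using indifference_prob_eq[of k c] br_le[of k] ar_greater[of k]
  by (simp add: cheap_prob_def algebra_simps)

lemma cheap_prob_nonneg: "0 \<le> cheap_prob k"
  using br_le[of k] ar_greater[of k]
  by (auto simp: cheap_prob_def indifference_prob_def zero_le_divide_iff)

lemma learner_wins:
  assumes "1 < (\<integral>\<^sup>+ k. ennreal (cheap_prob k) \<partial>count_space UNIV)"
  shows "\<exists>\<pi>. \<forall>y. (\<integral>\<^sup>+ k. (if k = y then a k else b k) \<partial>measure_pmf \<pi>) \<le> c"
proof -
  obtain Q where Q: "finite Q" "1 < (\<Sum>k\<in>Q. ennreal (cheap_prob k))"
    using nn_integral_count_space_less_imp_finite_sum[OF assms] by blast
  define Q' where "Q' = {k \<in> Q. b k \<le> c \<and> a k \<noteq> \<infinity>}"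
  have "finite Q'" using Q by (simp add: Q'_def)
  have "sum cheap_prob Q = sum cheap_prob Q'"
    unfolding Q'_def by (rule sum.mono_neutral_right) (use Q in \<open>auto simp: cheap_prob_def\<close>)
  then have sum_gt: "1 < sum cheap_prob Q'" using Q(2) cheap_prob_nonneg by simp
  then have "Q' \<noteq> {}" by auto
  define w where "w k = 1 / (ar k - br k)" for k
  have w: "0 < w k" "(ar k - br k) * w k = 1" if "k \<in> Q'" for k
    using that br_le[of k] ar_greater[of k] by (simp_all add: w_def Q'_def)
  obtain \<pi> where \<pi>: "set_pmf \<pi> \<subseteq> Q'" "\<And>k. k \<in> Q' \<Longrightarrow> pmf \<pi> k = w k / sum w Q'"
    using pmf_proportional_exists[of Q' w] \<open>finite Q'\<close> \<open>Q' \<noteq> {}\<close> w(1) by blast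
  have "sum w Q' > 0" using \<open>finite Q'\<close> \<open>Q' \<noteq> {}\<close> w(1) by (intro sum_pos) auto
  have "sum cheap_prob Q' = (\<Sum>k\<in>Q'. c * w k - br k * w k)"
  proof (rule sum.cong)
    fix k assume k: "k \<in> Q'"
    then have "cheap_prob k = cheap_prob k * (ar k - br k) * w k" using w(2)[OF k] by simp
    also have "\<dots> = (c - br k) * w k" using k cheap_prob_eq[of k] by (simp add: Q'_def)
    finally show "cheap_prob k = c * w k - br k * w k" by (simp add: algebra_simps)
  qed simp
  with sum_gt have "(\<Sum>k\<in>Q'. br k * w k) + 1 \<le> c * sum w Q'"
    by (simp add: sum_subtractf sum_distrib_left)
  then have "((\<Sum>k\<in>Q'. br k * w k) + (if y \<in> Q' then 1 else 0)) / sum w Q' \<le> c" for y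
    using \<open>sum w Q' > 0\<close> by (auto simp: divide_le_eq)
  moreover have "(\<integral>\<^sup>+ k. (if k = y then a k else b k) \<partial>measure_pmf \<pi>) =
      ennreal (((\<Sum>k\<in>Q'. br k * w k) + (if y \<in> Q' then 1 else 0)) / sum w Q')" for y
    using br_le w by (intro nn_integral_equalizing_pmf[OF \<open>finite Q'\<close> \<pi>]) (auto simp: Q'_def)
  ultimately show ?thesis by (intro exI[of _ \<pi>]) (simp add: ennreal_leI)
qed

lemma expected_loss_ge_if_dominating:
  assumes \<tau>: "set_pmf \<tau> = {k. b k \<le> c}" "c' / c * cheap_prob k \<le> pmf \<tau> k"
  shows "ennreal c' \<le> ennreal (pmf \<tau> k) * a k + ennreal (1 - pmf \<tau> k) * b k"
proof (cases "b k \<le> c")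
  case False
  then have "pmf \<tau> k = 0" using \<tau>(1) by (metis mem_Collect_eq set_pmf_iff)
  moreover have "ennreal c' \<le> ennreal c" using c'_less by (simp add: ennreal_leI)
  ultimately show ?thesis using False by simp
next
  case cheap: True
  show ?thesis
  proof (cases "a k = \<infinity>")
    case True
    have "0 < pmf \<tau> k" using \<tau>(1) cheap by (simp add: pmf_positive)
    then show ?thesis using True by (simp add: ennreal_mult_top)
  next
    case False
    have "c' / c * cheap_prob k * (ar k - br k) \<le> pmf \<tau> k * (ar k - br k)"
      using \<tau>(2) br_le[OF cheap] ar_greater[OF cheap False] by (intro mult_right_mono) auto
    then have "c' / c * (c - br k) \<le> pmf \<tau> k * (ar k - br k)"
      using cheap_prob_eq[OF cheap False] by (simp add: mult.assoc)
    moreover have "c' / c * br k \<le> br k"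
      using c'_nonneg c'_less br_nonneg by (intro mult_left_le_one_le) auto
    ultimately have "c' \<le> pmf \<tau> k * ar k + (1 - pmf \<tau> k) * br k"
      using c'_less c'_nonneg by (simp add: algebra_simps)
    then show ?thesis
      using False br_le[OF cheap] by (intro expected_loss_ge) (auto simp: pmf_le_1)
  qed
qed

lemma cheap_prob_mass: "1 < (\<integral>\<^sup>+ k. ennreal (cheap_prob k) \<partial>count_space UNIV)"
proof (rule ccontr)
  assume small: "\<not> ?thesis"
  have "ennreal (c' / c * cheap_prob k) = ennreal (c' / c) * ennreal (cheap_prob k)" for k
    using c'_nonneg c'_less cheap_prob_nonneg by (intro ennreal_mult) auto
  then have "(\<integral>\<^sup>+ k. ennreal (c' / c * cheap_prob k) \<partial>count_space UNIV) =
      ennreal (c' / c) * (\<integral>\<^sup>+ k. ennreal (cheap_prob k) \<partial>count_space UNIV)"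
    by (simp only:) (rule nn_integral_cmult, simp)
  also have "\<dots> \<le> ennreal (c' / c)"
    using small by (metis mult.right_neutral mult_left_mono not_less zero_le)
  also have "\<dots> < 1" using c'_nonneg c'_less by simp
  finally have "\<exists>\<tau>. set_pmf \<tau> = {k. b k \<le> c} \<and> (\<forall>k. c' / c * cheap_prob k \<le> pmf \<tau> k)"
  proof (rule pmf_dominating_exists)
    show "0 \<le> c' / c * cheap_prob k" for k
      using c'_nonneg c'_less cheap_prob_nonneg by simp
    show "k \<in> {k. b k \<le> c}" if "c' / c * cheap_prob k \<noteq> 0" for k
      using that by (auto simp: cheap_prob_def split: if_splits)
    show "{k. b k \<le> c} \<noteq> {}" using cheap_exists by auto
  qed
  then obtain \<tau> where \<tau>: "set_pmf \<tau> = {k. b k \<le> c}" "\<And>k. c' / c * cheap_prob k \<le> pmf \<tau> k"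
    by blast
  have "ennreal c' \<le> ennreal (pmf \<tau> k) * a k + ennreal (1 - pmf \<tau> k) * b k" for k
    using \<tau> by (rule expected_loss_ge_if_dominating)
  moreover have "set_pmf \<tau> \<subseteq> Y" using \<tau>(1) cheap by auto
  ultimately show False using adversary_loses[of \<tau>] by (meson leD)
qed

end

lemma one_round_minimax:
  fixes a b :: "'y::countable \<Rightarrow> ennreal" and c c' :: real
  assumes "Y \<noteq> {}" and c': "0 \<le> c'" "c' < c"
    and adv: "\<And>\<tau>. set_pmf \<tau> \<subseteq> Y \<Longrightarrow>
      \<exists>k. ennreal (pmf \<tau> k) * a k + ennreal (1 - pmf \<tau> k) * b k < c'"
  shows "\<exists>\<pi>. \<forall>y\<in>Y. (\<integral>\<^sup>+ k. (if k = y then a k else b k) \<partial>measure_pmf \<pi>) \<le> c"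
proof -
  interpret bandit_round Y a b c c' using c' adv by unfold_locales
  consider (pure) k where "b k \<le> c" "k \<in> Y \<longrightarrow> a k \<le> c"
    | (cheap) "\<And>k. b k \<le> c \<Longrightarrow> k \<in> Y \<and> c < a k" "\<exists>k. b k \<le> c"
    | (costly) "\<And>k. c < b k"
    by (meson not_le)
  then show ?thesis
  proof cases
    case pure
    then show ?thesis by (intro exI[of _ "return_pmf k"]) auto
  next
    case cheap
    then interpret bandit_round_cheap Y a b c c' by unfold_locales
    show ?thesis using learner_wins[OF cheap_prob_mass] by blast
  next
    case costly
    then interpret bandit_round_costly Y a b c c' by unfold_locales
    show ?thesis
    proof (cases "\<exists>y0 y1. y0 \<in> Y \<and> y1 \<in> Y \<and> y0 \<noteq> y1")
      case True
      then show ?thesis using learner_wins by blast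
    next
      case False
      with \<open>Y \<noteq> {}\<close> obtain y where "Y = {y}" by blast
      then have "y \<in> Y" by simp
      then obtain k where "(if k = y then a k else b k) < c'" by (rule pure_response)
      then have "(if k = y then a k else b k) \<le> c"
        using c' by (meson ennreal_leI less_imp_le order.trans)
      then show ?thesis using \<open>Y = {y}\<close> by (intro exI[of _ "return_pmf k"]) auto
    qed
  qed
qed

abbreviation expected_mistakes :: "('x, 'y) bhist pmf \<Rightarrow> ennreal" where
  "expected_mistakes p \<equiv> \<integral>\<^sup>+ h. of_nat (mistakes h) \<partial>measure_pmf p"

lemma set_round_step: "g \<in> set_pmf (round_step h x \<pi> \<tau>) \<Longrightarrow> \<exists>e. g = h @ [e]"
  by (auto simp: round_step_def)

lemma nn_integral_round_step:
  "(\<integral>\<^sup>+ g. F g \<partial>measure_pmf (round_step h x \<pi> \<tau>)) =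
   (\<integral>\<^sup>+ k. \<integral>\<^sup>+ y. F (h @ [(x, k = y, k)]) \<partial>measure_pmf \<tau> \<partial>measure_pmf \<pi>)"
  by (simp add: round_step_def nn_integral_pair_pmf')

lemma nn_integral_round_step_swap:
  "(\<integral>\<^sup>+ g. F g \<partial>measure_pmf (round_step h x \<pi> \<tau>)) =
   (\<integral>\<^sup>+ y. \<integral>\<^sup>+ k. F (h @ [(x, k = y, k)]) \<partial>measure_pmf \<pi> \<partial>measure_pmf \<tau>)"
  unfolding round_step_def by (subst pair_commute_pmf) (simp add: nn_integral_pair_pmf')

lemma expected_mistakes_bind_snoc:
  assumes "\<And>h g. g \<in> set_pmf (f h) \<Longrightarrow> \<exists>e. g = h @ [e]"
  shows "expected_mistakes p \<le> expected_mistakes (p \<bind> f)"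
proof -
  have "of_nat (mistakes h) \<le> expected_mistakes (f h)" for h
  proof -
    have "AE g in measure_pmf (f h). of_nat (mistakes h) \<le> (of_nat (mistakes g) :: ennreal)"
      using assms by (fastforce simp: AE_measure_pmf_iff mistakes_def)
    then have "(\<integral>\<^sup>+ g. of_nat (mistakes h) \<partial>measure_pmf (f h)) \<le> expected_mistakes (f h)"
      by (rule nn_integral_mono_AE)
    then show ?thesis by simp
  qed
  then show ?thesis by (simp add: nn_integral_bind_pmf nn_integral_mono)
qed

section \<open>The dual game started from an arbitrary history\<close>

definition dual_round ::
  "(('x, 'y) bhist \<Rightarrow> 'x) \<Rightarrow> (('x, 'y) bhist \<Rightarrow> 'y pmf) \<Rightarrow>
   (('x, 'y) bhist \<Rightarrow> 'x \<Rightarrow> 'y pmf \<Rightarrow> 'y pmf) \<Rightarrow> ('x, 'y) bhist \<Rightarrow> ('x, 'y) bhist pmf" where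
  "dual_round ax aT L h = round_step h (ax h) (L h (ax h) (aT h)) (aT h)"

primrec dual_hist_from ::
  "('x, 'y) bhist \<Rightarrow> (('x, 'y) bhist \<Rightarrow> 'x) \<Rightarrow> (('x, 'y) bhist \<Rightarrow> 'y pmf) \<Rightarrow>
   (('x, 'y) bhist \<Rightarrow> 'x \<Rightarrow> 'y pmf \<Rightarrow> 'y pmf) \<Rightarrow> nat \<Rightarrow> ('x, 'y) bhist pmf" where
  "dual_hist_from h ax aT L 0 = return_pmf h"
| "dual_hist_from h ax aT L (Suc n) = dual_hist_from h ax aT L n \<bind> dual_round ax aT L"

lemma dual_hist_eq_dual_hist_from_Nil: "dual_hist ax aT L n = dual_hist_from [] ax aT L n"
  by (induction n) (simp_all add: dual_round_def[abs_def] Let_def)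

lemma dual_hist_from_Suc_left:
  "dual_hist_from h ax aT L (Suc n) = dual_round ax aT L h \<bind> (\<lambda>g. dual_hist_from g ax aT L n)"
  by (induction n) (simp_all add: bind_return_pmf bind_return_pmf' bind_assoc_pmf)

lemma set_dual_hist_from: "g \<in> set_pmf (dual_hist_from h ax aT L n) \<Longrightarrow> \<exists>r. g = h @ r"
proof (induction n arbitrary: g)
  case (Suc n)
  then obtain g0 where "g0 \<in> set_pmf (dual_hist_from h ax aT L n)" "g \<in> set_pmf (dual_round ax aT L g0)"
    by auto
  with Suc.IH show ?case by (fastforce simp: dual_round_def dest: set_round_step)
qed simp

lemma dual_hist_from_cong:
  assumes "\<And>r. ax (h @ r) = ax' (h @ r)" "\<And>r. aT (h @ r) = aT' (h @ r)"
  shows "dual_hist_from h ax aT L n = dual_hist_from h ax' aT' L n"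
proof (induction n)
  case (Suc n)
  have "dual_round ax aT L g = dual_round ax' aT' L g" if "g \<in> set_pmf (dual_hist_from h ax' aT' L n)" for g
    using set_dual_hist_from[OF that] assms by (auto simp: dual_round_def)
  then show ?case by (simp add: Suc.IH cong: bind_pmf_cong)
qed simp

definition dual_mistakes_from ::
  "('x, 'y) bhist \<Rightarrow> (('x, 'y) bhist \<Rightarrow> 'x) \<Rightarrow> (('x, 'y) bhist \<Rightarrow> 'y pmf) \<Rightarrow>
   (('x, 'y) bhist \<Rightarrow> 'x \<Rightarrow> 'y pmf \<Rightarrow> 'y pmf) \<Rightarrow> ennreal" where
  "dual_mistakes_from h ax aT L = (SUP n. expected_mistakes (dual_hist_from h ax aT L n))"

lemma dual_mistakes_eq_from_Nil: "dual_mistakes ax aT L = dual_mistakes_from [] ax aT L"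
  by (simp add: dual_mistakes_def dual_mistakes_from_def dual_hist_eq_dual_hist_from_Nil)

lemma mistakes_le_dual_mistakes_from: "of_nat (mistakes h) \<le> dual_mistakes_from h ax aT L"
  unfolding dual_mistakes_from_def by (rule SUP_upper2[of 0]) simp_all

lemma dual_mistakes_from_ge_round:
  "(\<integral>\<^sup>+ g. dual_mistakes_from g ax aT L \<partial>measure_pmf (dual_round ax aT L h)) \<le> dual_mistakes_from h ax aT L"
proof -
  have "expected_mistakes (dual_hist_from g ax aT L n) \<le> expected_mistakes (dual_hist_from g ax aT L (Suc n))"
    for g n unfolding dual_hist_from.simps(2)
    by (rule expected_mistakes_bind_snoc) (auto simp: dual_round_def dest: set_round_step)
  then have "incseq (\<lambda>n g. expected_mistakes (dual_hist_from g ax aT L n))"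
    by (intro incseq_SucI le_funI)
  then have "(\<integral>\<^sup>+ g. dual_mistakes_from g ax aT L \<partial>measure_pmf (dual_round ax aT L h)) =
      (SUP n. \<integral>\<^sup>+ g. expected_mistakes (dual_hist_from g ax aT L n) \<partial>measure_pmf (dual_round ax aT L h))"
    unfolding dual_mistakes_from_def by (rule nn_integral_monotone_convergence_SUP) simp
  also have "\<dots> = (SUP n. expected_mistakes (dual_hist_from h ax aT L (Suc n)))"
    by (simp only: dual_hist_from_Suc_left nn_integral_bind_pmf)
  also have "\<dots> \<le> dual_mistakes_from h ax aT L"
    unfolding dual_mistakes_from_def by (rule SUP_mono) (blast intro: order.refl)
  finally show ?thesis .
qed

definition adversary_value ::
  "('x, 'y) bhist \<Rightarrow> (('x, 'y) bhist \<Rightarrow> 'x) \<Rightarrow> (('x, 'y) bhist \<Rightarrow> 'y pmf) \<Rightarrow> ennreal" where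
  "adversary_value h ax aT = (INF L. dual_mistakes_from h ax aT L)"

definition dual_value :: "('x, 'y) pattern set \<Rightarrow> ('x, 'y) bhist \<Rightarrow> ennreal" where
  "dual_value P h = (SUP (ax, aT) \<in> {(ax, aT). dual_consistent P ax aT}. adversary_value h ax aT)"

lemma opt_d_bandit_adap_eq_dual_value: "opt_d_bandit_adap P = dual_value P []"
  by (simp add: opt_d_bandit_adap_def dual_value_def adversary_value_def dual_mistakes_eq_from_Nil)

lemma adversary_value_le_dual_value:
  "dual_consistent P ax aT \<Longrightarrow> adversary_value h ax aT \<le> dual_value P h"
  unfolding dual_value_def by (rule SUP_upper2[of "(ax, aT)"]) auto

lemma mistakes_le_dual_value:
  assumes "dual_consistent P ax aT"
  shows "of_nat (mistakes h) \<le> dual_value P h"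
proof -
  have "of_nat (mistakes h) \<le> adversary_value h ax aT"
    unfolding adversary_value_def by (rule INF_greatest) (rule mistakes_le_dual_mistakes_from)
  also have "\<dots> \<le> dual_value P h"
    using assms by (rule adversary_value_le_dual_value)
  finally show ?thesis .
qed

text \<open>Behind h, the adversary \<beta> b k takes over after the round (x, b, k); off these branches \<alpha> plays.\<close>

definition continuation ::
  "('x, 'y) bhist \<Rightarrow> 'x \<Rightarrow> (bool \<Rightarrow> 'y \<Rightarrow> 'a) \<Rightarrow> 'a \<Rightarrow> ('x, 'y) bhist \<Rightarrow> 'a" where
  "continuation h x \<beta> \<alpha> g =
     (if length h < length g \<and> take (length h) g = h \<and> fst (g ! length h) = x
      then \<beta> (fst (snd (g ! length h))) (snd (snd (g ! length h))) else \<alpha>)"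

definition paste_instance ::
  "('x, 'y) bhist \<Rightarrow> 'x \<Rightarrow> (bool \<Rightarrow> 'y \<Rightarrow> (('x, 'y) bhist \<Rightarrow> 'x) \<times> 'a) \<Rightarrow>
   (('x, 'y) bhist \<Rightarrow> 'x) \<times> 'a \<Rightarrow> ('x, 'y) bhist \<Rightarrow> 'x" where
  "paste_instance h x \<beta> \<alpha> g = (if g = h then x else fst (continuation h x \<beta> \<alpha> g) g)"

definition paste_label_pmf ::
  "('x, 'y) bhist \<Rightarrow> 'x \<Rightarrow> 'y pmf \<Rightarrow> (bool \<Rightarrow> 'y \<Rightarrow> 'a \<times> (('x, 'y) bhist \<Rightarrow> 'y pmf)) \<Rightarrow>
   'a \<times> (('x, 'y) bhist \<Rightarrow> 'y pmf) \<Rightarrow> ('x, 'y) bhist \<Rightarrow> 'y pmf" where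
  "paste_label_pmf h x \<tau> \<beta> \<alpha> g = (if g = h then \<tau> else snd (continuation h x \<beta> \<alpha> g) g)"

lemma continuation_after_round: "continuation h x \<beta> \<alpha> (h @ (x, b, k) # r) = \<beta> b k"
  by (simp add: continuation_def nth_append)

lemma paste_after_round:
  "paste_instance h x \<beta> \<alpha> (h @ (x, b, k) # r) = fst (\<beta> b k) (h @ (x, b, k) # r)"
  "paste_label_pmf h x \<tau> \<beta> \<alpha> (h @ (x, b, k) # r) = snd (\<beta> b k) (h @ (x, b, k) # r)"
  by (simp_all add: paste_instance_def paste_label_pmf_def continuation_after_round)

lemma dual_consistent_paste:
  assumes "\<And>b k. dual_consistent P (fst (\<beta> b k)) (snd (\<beta> b k))"
    and "dual_consistent P (fst \<alpha>) (snd \<alpha>)"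
    and "\<forall>y \<in> set_pmf \<tau>. realizable_ext P h x y"
  shows "dual_consistent P (paste_instance h x \<beta> \<alpha>) (paste_label_pmf h x \<tau> \<beta> \<alpha>)"
proof -
  have "dual_consistent P (fst (continuation h x \<beta> \<alpha> g)) (snd (continuation h x \<beta> \<alpha> g))" for g
    using assms(1,2) by (simp add: continuation_def)
  then show ?thesis
    using assms(3) by (auto simp: dual_consistent_def paste_instance_def paste_label_pmf_def)
qed

lemma dual_mistakes_from_paste_after_round:
  "dual_mistakes_from (h @ [(x, b, k)]) (paste_instance h x \<beta> \<alpha>) (paste_label_pmf h x \<tau> \<beta> \<alpha>) L =
   dual_mistakes_from (h @ [(x, b, k)]) (fst (\<beta> b k)) (snd (\<beta> b k)) L"
proof -
  have "dual_hist_from (h @ [(x, b, k)]) (paste_instance h x \<beta> \<alpha>) (paste_label_pmf h x \<tau> \<beta> \<alpha>) L n =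
        dual_hist_from (h @ [(x, b, k)]) (fst (\<beta> b k)) (snd (\<beta> b k)) L n" for n
    by (rule dual_hist_from_cong) (simp_all add: paste_after_round)
  then show ?thesis by (simp add: dual_mistakes_from_def)
qed

lemma dual_mistakes_from_paste_ge:
  fixes h :: "('x, 'y) bhist" and x :: 'x
    and \<beta> :: "bool \<Rightarrow> 'y \<Rightarrow> (('x, 'y) bhist \<Rightarrow> 'x) \<times> (('x, 'y) bhist \<Rightarrow> 'y pmf)"
  defines "v b k \<equiv> adversary_value (h @ [(x, b, k)]) (fst (\<beta> b k)) (snd (\<beta> b k))"
  shows "(\<integral>\<^sup>+ k. ennreal (pmf \<tau> k) * v True k + ennreal (1 - pmf \<tau> k) * v False k \<partial>measure_pmf (L h x \<tau>))
    \<le> dual_mistakes_from h (paste_instance h x \<beta> \<alpha>) (paste_label_pmf h x \<tau> \<beta> \<alpha>) L"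
proof -
  let ?ax = "paste_instance h x \<beta> \<alpha>" and ?aT = "paste_label_pmf h x \<tau> \<beta> \<alpha>"
  have "ennreal (pmf \<tau> k) * v True k + ennreal (1 - pmf \<tau> k) * v False k
      \<le> (\<integral>\<^sup>+ y. dual_mistakes_from (h @ [(x, k = y, k)]) ?ax ?aT L \<partial>measure_pmf \<tau>)" for k
  proof -
    have "v b k \<le> dual_mistakes_from (h @ [(x, b, k)]) ?ax ?aT L" for b
      unfolding v_def dual_mistakes_from_paste_after_round adversary_value_def by (rule INF_lower) simp
    then show ?thesis unfolding nn_integral_pmf_if_eq[symmetric] by (intro nn_integral_mono) auto
  qed
  then have "(\<integral>\<^sup>+ k. ennreal (pmf \<tau> k) * v True k + ennreal (1 - pmf \<tau> k) * v False k \<partial>measure_pmf (L h x \<tau>))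
      \<le> (\<integral>\<^sup>+ k. \<integral>\<^sup>+ y. dual_mistakes_from (h @ [(x, k = y, k)]) ?ax ?aT L
            \<partial>measure_pmf \<tau> \<partial>measure_pmf (L h x \<tau>))"
    by (intro nn_integral_mono)
  also have "\<dots> = (\<integral>\<^sup>+ g. dual_mistakes_from g ?ax ?aT L \<partial>measure_pmf (dual_round ?ax ?aT L h))"
    by (simp add: dual_round_def nn_integral_round_step paste_instance_def paste_label_pmf_def)
  also have "\<dots> \<le> dual_mistakes_from h ?ax ?aT L"
    by (rule dual_mistakes_from_ge_round)
  finally show ?thesis .
qed

lemma dual_value_ge_one_round:
  assumes adv: "dual_consistent P ax0 aT0"
    and \<tau>: "\<forall>y \<in> set_pmf \<tau>. realizable_ext P h x y"
    and c: "\<And>k. c < ennreal (pmf \<tau> k) * dual_value P (h @ [(x, True, k)]) +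
                     ennreal (1 - pmf \<tau> k) * dual_value P (h @ [(x, False, k)])"
  shows "c \<le> dual_value P h"
proof -
  let ?A = "{(ax, aT). dual_consistent P ax aT}"
  let ?v = "\<lambda>b k \<alpha>. adversary_value (h @ [(x, b, k)]) (fst \<alpha>) (snd \<alpha>)"
  have "\<exists>\<alpha>\<in>?A. \<exists>\<alpha>'\<in>?A. c < ennreal (pmf \<tau> k) * ?v True k \<alpha> + ennreal (1 - pmf \<tau> k) * ?v False k \<alpha>'"
    for k
  proof (rule less_add_SUP_ennreal_imp)
    show "?A \<noteq> {}" using adv by blast
    have "dual_value P g = (SUP \<alpha>\<in>?A. adversary_value g (fst \<alpha>) (snd \<alpha>))" for g
      by (simp add: dual_value_def split_beta')
    then show "c < ennreal (pmf \<tau> k) * (SUP \<alpha>\<in>?A. ?v True k \<alpha>) + ennreal (1 - pmf \<tau> k) * (SUP \<alpha>\<in>?A. ?v False k \<alpha>)"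
      using c[of k] by simp
  qed
  then obtain \<beta>T \<beta>F where \<beta>T: "\<And>k. \<beta>T k \<in> ?A" and \<beta>F: "\<And>k. \<beta>F k \<in> ?A"
    and less: "\<And>k. c < ennreal (pmf \<tau> k) * ?v True k (\<beta>T k) + ennreal (1 - pmf \<tau> k) * ?v False k (\<beta>F k)"
    by (metis (no_types))
  define \<beta> where "\<beta> b k = (if b then \<beta>T k else \<beta>F k)" for b k
  have \<beta>: "dual_consistent P (fst (\<beta> b k)) (snd (\<beta> b k))" for b k
    using \<beta>T \<beta>F by (auto simp: \<beta>_def split_beta)
  let ?ax = "paste_instance h x \<beta> (ax0, aT0)" and ?aT = "paste_label_pmf h x \<tau> \<beta> (ax0, aT0)"
  have "c \<le> dual_mistakes_from h ?ax ?aT L" for L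
  proof -
    have "(\<integral>\<^sup>+ k. c \<partial>measure_pmf (L h x \<tau>)) \<le>
        (\<integral>\<^sup>+ k. ennreal (pmf \<tau> k) * ?v True k (\<beta> True k) + ennreal (1 - pmf \<tau> k) * ?v False k (\<beta> False k)
          \<partial>measure_pmf (L h x \<tau>))"
      using less by (intro nn_integral_mono) (simp add: \<beta>_def less_imp_le)
    also have "\<dots> \<le> dual_mistakes_from h ?ax ?aT L"
      by (rule dual_mistakes_from_paste_ge)
    finally show ?thesis by (simp add: measure_pmf.emeasure_space_1)
  qed
  then have "c \<le> adversary_value h ?ax ?aT"
    unfolding adversary_value_def by (rule INF_greatest)
  also have "\<dots> \<le> dual_value P h"
    using \<beta> adv \<tau> by (intro adversary_value_le_dual_value dual_consistent_paste) auto
  finally show ?thesis .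
qed

section \<open>A near-optimal learner for the primal game\<close>

lemma dual_value_one_round_learner:
  fixes P :: "('x, 'y::countable) pattern set"
  assumes adv: "dual_consistent P ax0 aT0" and e: "0 < e"
  shows "\<exists>\<pi>. \<forall>y. realizable_ext P h x y \<longrightarrow>
    (\<integral>\<^sup>+ k. dual_value P (h @ [(x, k = y, k)]) \<partial>measure_pmf \<pi>) \<le> dual_value P h + ennreal e"
proof (cases "dual_value P h = \<infinity> \<or> {y. realizable_ext P h x y} = {}")
  case True
  then show ?thesis by auto
next
  case False
  then obtain v where v: "dual_value P h = ennreal v" "0 \<le> v" and Y: "{y. realizable_ext P h x y} \<noteq> {}"
    by (cases "dual_value P h") auto
  let ?a = "\<lambda>k. dual_value P (h @ [(x, True, k)])" and ?b = "\<lambda>k. dual_value P (h @ [(x, False, k)])"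
  have "\<exists>\<pi>. \<forall>y\<in>{y. realizable_ext P h x y}.
      (\<integral>\<^sup>+ k. (if k = y then ?a k else ?b k) \<partial>measure_pmf \<pi>) \<le> ennreal (v + e)"
  proof (rule one_round_minimax[OF Y])
    show "0 \<le> v + e / 2" "v + e / 2 < v + e" using v e by simp_all
    fix \<tau> :: "'y pmf" assume \<tau>: "set_pmf \<tau> \<subseteq> {y. realizable_ext P h x y}"
    show "\<exists>k. ennreal (pmf \<tau> k) * ?a k + ennreal (1 - pmf \<tau> k) * ?b k < ennreal (v + e / 2)"
    proof (rule ccontr)
      assume ge: "\<not> ?thesis"
      have "ennreal (v + e / 4) < ennreal (v + e / 2)" using v e by (simp add: ennreal_less_iff)
      then have "ennreal (v + e / 4) < ennreal (pmf \<tau> k) * ?a k + ennreal (1 - pmf \<tau> k) * ?b k" for k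
        using ge by (meson not_less order.strict_trans2)
      then have "ennreal (v + e / 4) \<le> dual_value P h"
        using \<tau> by (intro dual_value_ge_one_round[OF adv]) auto
      then show False using v e by (simp add: ennreal_le_iff)
    qed
  qed
  moreover have "ennreal (v + e) = dual_value P h + ennreal e" using v e by simp
  moreover have "dual_value P (h @ [(x, k = y, k)]) = (if k = y then ?a k else ?b k)" for k y
    by simp
  ultimately show ?thesis by auto
qed

definition greedy_learner ::
  "('x, 'y::countable) pattern set \<Rightarrow> real \<Rightarrow> ('x, 'y) bhist \<Rightarrow> 'x \<Rightarrow> 'y pmf" where
  "greedy_learner P e h x = (SOME \<pi>. \<forall>y. realizable_ext P h x y \<longrightarrow>
     (\<integral>\<^sup>+ k. dual_value P (h @ [(x, k = y, k)]) \<partial>measure_pmf \<pi>) \<le>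
       dual_value P h + ennreal (e / 2 ^ Suc (length h)))"

lemma greedy_learner_step:
  assumes "dual_consistent P ax0 aT0" "0 < e" "realizable_ext P h x y"
  shows "(\<integral>\<^sup>+ k. dual_value P (h @ [(x, k = y, k)]) \<partial>measure_pmf (greedy_learner P e h x)) \<le>
           dual_value P h + ennreal (e / 2 ^ Suc (length h))"
proof -
  have "0 < e / 2 ^ Suc (length h)" using assms(2) by simp
  from someI_ex[OF dual_value_one_round_learner[OF assms(1) this]] show ?thesis
    using assms(3) unfolding greedy_learner_def by blast
qed


lemma realizable_Nil:
  assumes "pattern_class P"
  shows "realizable P []"
proof -
  from assms obtain s where "s \<in> P" "\<forall>s'. subseq s' s \<longrightarrow> s' \<in> P"
    by (auto simp: pattern_class_def)
  then have "[] \<in> P" by auto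
  then show ?thesis by (auto simp: realizable_def agrees_def)
qed

lemma realizable_snoc:
  assumes "realizable_ext P h x y"
  shows "realizable P (h @ [(x, k = y, k)])"
proof -
  obtain ys where ys: "agrees h ys" "zip (map fst h) ys @ [(x, y)] \<in> P"
    using assms by (auto simp: realizable_ext_def)
  then have "agrees (h @ [(x, k = y, k)]) (ys @ [y])"
    by (auto simp: agrees_def nth_append less_Suc_eq)
  moreover have "zip (map fst (h @ [(x, k = y, k)])) (ys @ [y]) = zip (map fst h) ys @ [(x, y)]"
    using ys(1) by (simp add: agrees_def)
  ultimately show ?thesis using ys(2) unfolding realizable_def by metis
qed

lemma primal_hist_support:
  assumes "pattern_class P" "primal_consistent P ax aT" "g \<in> set_pmf (primal_hist L ax aT n)"
  shows "realizable P g \<and> length g = n"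
  using assms(3)
proof (induction n arbitrary: g)
  case 0
  then show ?case using realizable_Nil[OF assms(1)] by simp
next
  case (Suc n)
  then obtain g0 y k where g0: "g0 \<in> set_pmf (primal_hist L ax aT n)"
    and y: "y \<in> set_pmf (aT g0 (ax g0) (L g0 (ax g0)))" and g: "g = g0 @ [(ax g0, k = y, k)]"
    by (auto simp: Let_def round_step_def)
  with Suc.IH[OF g0] assms(2) show ?case
    by (auto simp: primal_consistent_def intro: realizable_snoc)
qed

lemma expected_dual_value_greedy_learner_round:
  assumes adv: "dual_consistent P ax0 aT0" and e: "0 < e"
    and cons: "primal_consistent P ax aT" and g: "realizable P g"
  defines "\<pi> \<equiv> greedy_learner P e g (ax g)"
  shows "(\<integral>\<^sup>+ g'. dual_value P g' \<partial>measure_pmf (round_step g (ax g) \<pi> (aT g (ax g) \<pi>)))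
    \<le> dual_value P g + ennreal (e / 2 ^ Suc (length g))"
proof -
  have "AE y in measure_pmf (aT g (ax g) \<pi>).
      (\<integral>\<^sup>+ k. dual_value P (g @ [(ax g, k = y, k)]) \<partial>measure_pmf \<pi>)
        \<le> dual_value P g + ennreal (e / 2 ^ Suc (length g))"
    unfolding AE_measure_pmf_iff
  proof
    fix y assume "y \<in> set_pmf (aT g (ax g) \<pi>)"
    then have "realizable_ext P g (ax g) y"
      using cons g by (auto simp: primal_consistent_def)
    then show "(\<integral>\<^sup>+ k. dual_value P (g @ [(ax g, k = y, k)]) \<partial>measure_pmf \<pi>)
        \<le> dual_value P g + ennreal (e / 2 ^ Suc (length g))"
      unfolding \<pi>_def by (rule greedy_learner_step[OF adv e])
  qed
  then show ?thesis
    using nn_integral_mono_AE by (fastforce simp: nn_integral_round_step_swap measure_pmf.emeasure_space_1)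
qed

lemma expected_dual_value_greedy_learner:
  fixes P :: "('x, 'y::countable) pattern set"
  assumes pc: "pattern_class P" and adv: "dual_consistent P ax0 aT0" and e: "0 < e"
    and cons: "primal_consistent P ax aT"
  shows "(\<integral>\<^sup>+ g. dual_value P g \<partial>measure_pmf (primal_hist (greedy_learner P e) ax aT n))
           \<le> dual_value P [] + ennreal (e - e / 2 ^ n)"
proof (induction n)
  case (Suc n)
  let ?L = "greedy_learner P e" and ?p = "primal_hist (greedy_learner P e) ax aT n"
  have "(\<integral>\<^sup>+ g'. dual_value P g' \<partial>measure_pmf (round_step g (ax g) (?L g (ax g)) (aT g (ax g) (?L g (ax g)))))
      \<le> dual_value P g + ennreal (e / 2 ^ Suc n)" if "g \<in> set_pmf ?p" for g
    using primal_hist_support[OF pc cons that] expected_dual_value_greedy_learner_round[OF adv e cons]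
    by auto
  then have "(\<integral>\<^sup>+ g. dual_value P g \<partial>measure_pmf (primal_hist ?L ax aT (Suc n)))
      \<le> (\<integral>\<^sup>+ g. dual_value P g + ennreal (e / 2 ^ Suc n) \<partial>measure_pmf ?p)"
    by (auto simp: Let_def nn_integral_bind_pmf AE_measure_pmf_iff intro!: nn_integral_mono_AE)
  also have "\<dots> \<le> dual_value P [] + ennreal (e - e / 2 ^ n) + ennreal (e / 2 ^ Suc n)"
    using Suc.IH by (simp add: nn_integral_add measure_pmf.emeasure_space_1 add_right_mono)
  also have "\<dots> = dual_value P [] + ennreal (e - e / 2 ^ Suc n)"
  proof -
    have "e / 2 ^ n \<le> e" using e by (simp add: divide_le_eq)
    then have "ennreal (e - e / 2 ^ n) + ennreal (e / 2 ^ Suc n) = ennreal (e - e / 2 ^ Suc n)"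
      using e by (simp add: ennreal_plus[symmetric] del: ennreal_plus)
    then show ?thesis by (simp add: add.assoc)
  qed
  finally show ?case .
qed simp

lemma primal_mistakes_greedy_learner_le:
  fixes P :: "('x, 'y::countable) pattern set"
  assumes "pattern_class P" "dual_consistent P ax0 aT0" "0 < e" "primal_consistent P ax aT"
  shows "primal_mistakes (greedy_learner P e) ax aT \<le> dual_value P [] + ennreal e"
  unfolding primal_mistakes_def
proof (rule SUP_least)
  fix n
  have "expected_mistakes (primal_hist (greedy_learner P e) ax aT n)
      \<le> (\<integral>\<^sup>+ g. dual_value P g \<partial>measure_pmf (primal_hist (greedy_learner P e) ax aT n))"
    by (intro nn_integral_mono mistakes_le_dual_value[OF assms(2)])
  also have "\<dots> \<le> dual_value P [] + ennreal (e - e / 2 ^ n)"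
    using assms by (rule expected_dual_value_greedy_learner)
  also have "\<dots> \<le> dual_value P [] + ennreal e"
    using assms(3) by (intro add_left_mono ennreal_leI) simp
  finally show "expected_mistakes (primal_hist (greedy_learner P e) ax aT n) \<le> dual_value P [] + ennreal e" .
qed

lemma opt_bandit_adap_le_dual_value:
  fixes P :: "('x, 'y::countable) pattern set"
  assumes "pattern_class P" "dual_consistent P ax0 aT0"
  shows "opt_bandit_adap P \<le> dual_value P []"
proof (rule ennreal_le_epsilon)
  fix e :: real assume "0 < e"
  have "opt_bandit_adap P \<le>
      (SUP (ax, aT)\<in>{(ax, aT). primal_consistent P ax aT}. primal_mistakes (greedy_learner P e) ax aT)"
    unfolding opt_bandit_adap_def by (rule INF_lower) simp
  also have "\<dots> \<le> dual_value P [] + ennreal e"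
    using primal_mistakes_greedy_learner_le[OF assms \<open>0 < e\<close>] by (auto intro: SUP_least)
  finally show "opt_bandit_adap P \<le> dual_value P [] + ennreal e" .
qed

lemma primal_hist_oblivious:
  "primal_hist L ax (\<lambda>h x \<pi>. aT h) n = dual_hist ax aT (\<lambda>h x \<tau>. L h x) n"
  by (induction n) (simp_all add: Let_def)

lemma opt_d_bandit_adap_le_opt_bandit_adap: "opt_d_bandit_adap P \<le> opt_bandit_adap P"
  unfolding opt_bandit_adap_def opt_d_bandit_adap_def
proof (intro INF_greatest SUP_least, clarify)
  fix L ax aT assume "dual_consistent P ax aT"
  then have "primal_consistent P ax (\<lambda>h x \<pi>. aT h)"
    by (simp add: primal_consistent_def dual_consistent_def)
  then have "primal_mistakes L ax (\<lambda>h x \<pi>. aT h)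
      \<le> (SUP (ax, aT)\<in>{(ax, aT). primal_consistent P ax aT}. primal_mistakes L ax aT)"
    by (intro SUP_upper2[of "(ax, \<lambda>h x \<pi>. aT h)"]) auto
  moreover have "(INF L'. dual_mistakes ax aT L') \<le> primal_mistakes L ax (\<lambda>h x \<pi>. aT h)"
    by (rule INF_lower2[of "\<lambda>h x \<tau>. L h x"])
      (simp_all add: primal_mistakes_def dual_mistakes_def primal_hist_oblivious)
  ultimately show "(INF L'. dual_mistakes ax aT L')
      \<le> (SUP (ax, aT)\<in>{(ax, aT). primal_consistent P ax aT}. primal_mistakes L ax aT)"
    by (rule order.trans[rotated])
qed

theorem lemma3p1:
  fixes P :: "('x, 'y::countable) pattern set"
  assumes "pattern_class P"
  shows "opt_bandit_adap P = opt_d_bandit_adap P"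
proof (rule antisym)
  show "opt_bandit_adap P \<le> opt_d_bandit_adap P"
  proof (cases "\<exists>ax aT. primal_consistent P ax aT")
    case False
    then show ?thesis by (simp add: opt_bandit_adap_def)
  next
    case True
    then obtain ax aT where "primal_consistent P ax aT" by blast
    then have "dual_consistent P ax (\<lambda>h. aT h (ax h) (return_pmf undefined))"
      by (simp add: primal_consistent_def dual_consistent_def)
    with assms show ?thesis
      unfolding opt_d_bandit_adap_eq_dual_value by (rule opt_bandit_adap_le_dual_value)
  qed
qed (rule opt_d_bandit_adap_le_opt_bandit_adap)

end
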